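(* Let $q$ be an odd prime power. Then (i) $\prod\{a\in{\mathbb F}_q^\times: a \text{ and } 4-a \text{ are nonsquares in }{\mathbb F}_q\}=2$; (ii) $\prod\{a\in{\mathbb F}_q^\times: -a \text{ and } 4+a \text{ are nonsquares in }{\mathbb F}_q\}=2$ if $q\equiv\pm1\pmod 8$ and $=-2$ if $q\equiv\pm3\pmod 8$. *)

theory Defs
  imports Main
begin

text \<open>Squares in a field: a is a square iff a = x^2 for some x (so 0 is a square,
  and nonsquares are automatically nonzero).\<close>
definition is_square :: "'a::monoid_mult \<Rightarrow> bool" where
  "is_square a \<longleftrightarrow> (\<exists>x. a = x ^ 2)"

end

theory Submission
  imports
    Defs
    "HOL-Computational_Algebra.Polynomial"
    "HOL-Library.Cardinality"
    "HOL-Library.FuncSet"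
begin

text \<open>
  Let \<open>m = (q - 1) / 2\<close>. By Euler's criterion \<open>c\<^sup>m = \<plusminus>1\<close> according to whether \<open>c \<noteq> 0\<close>
  is a square, so squareness is multiplicative and the nonsquares are exactly the \<open>m\<close> roots of
  \<open>X\<^sup>m + 1\<close>. Sort the elements \<open>a \<notin> {0, 4}\<close> into four classes by the squareness of \<open>a\<close> and
  of \<open>4 - a\<close>; the set \<open>S\<close> of part (i) is the class where both are nonsquares. The translation
  \<open>a \<mapsto> 4 - a\<close> swaps the two mixed classes, and since \<open>4 - 16/a = -4 (4 - a) / a\<close> the inversion
  \<open>a \<mapsto> 16/a\<close> maps each class onto a class, which class depending on whether \<open>-1\<close> is a square.
  Counting gives \<open>|S| = \<lfloor>(q + 1)/4\<rfloor>\<close>.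

  If \<open>-1 = i\<^sup>2\<close>, then \<open>a \<mapsto> 16/a\<close> maps \<open>S\<close> onto the nonsquares \<open>a\<close> with \<open>4 - a\<close> a square, so
  evaluating \<open>X\<^sup>m + 1\<close> at \<open>4\<close> gives \<open>2 = \<Prod>S \<cdot> (-4)\<^bsup>|S|\<^esup>\<close>, and \<open>(-4)\<^bsup>|S|\<^esup> = (2i)\<^sup>m = 1\<close> because
  \<open>2i = (1 + i)\<^sup>2\<close>. If \<open>-1\<close> is a nonsquare, \<open>a \<mapsto> 16/a\<close> is an involution of \<open>S\<close> whose only
  possible fixed point is \<open>-4\<close>, present iff \<open>2\<close> is a nonsquare; pairing \<open>a/4\<close> with its image gives
  \<open>\<Prod>S = 4\<^bsup>|S|\<^esup> 2\<^sup>m = 2 (2\<^sup>m)\<^sup>2 = 2\<close>. Part (ii) is part (i) after \<open>a \<mapsto> -a\<close>, which contributes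
  the sign \<open>(-1)\<^bsup>|S|\<^esup>\<close>, determined by \<open>q mod 8\<close>.
\<close>

lemma prod_involution_eq_prod_fixed_points:
  fixes g :: "'b \<Rightarrow> 'c::comm_monoid_mult"
  assumes "finite A" "\<And>x. x \<in> A \<Longrightarrow> f x \<in> A" "\<And>x. x \<in> A \<Longrightarrow> f (f x) = x"
    and "\<And>x. x \<in> A \<Longrightarrow> f x \<noteq> x \<Longrightarrow> g x * g (f x) = 1"
  shows "prod g A = prod g {x\<in>A. f x = x}"
  using assms
proof (induction "card A" arbitrary: A rule: less_induct)
  case (less A)
  show ?case
  proof (cases "\<forall>x\<in>A. f x = x")
    case True
    then have "{x\<in>A. f x = x} = A" by blast
    then show ?thesis by simp
  next
    case False
    then obtain x where x: "x \<in> A" "f x \<noteq> x" by auto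
    have fx: "f x \<in> A" "f (f x) = x" using less.prems x by auto
    define A' where "A' = A - {x, f x}"
    have A': "A = insert x (insert (f x) A')" "x \<notin> insert (f x) A'" "f x \<notin> A'"
      using x fx by (auto simp: A'_def)
    have "prod g A' = prod g {y\<in>A'. f y = y}"
    proof (rule less.hyps)
      show "card A' < card A" unfolding A'_def using x less.prems(1) by (intro psubset_card_mono) auto
      show "f y \<in> A'" "f (f y) = y" if "y \<in> A'" for y
        using that less.prems(2,3) fx by (auto simp: A'_def) metis+
    qed (use less.prems in \<open>auto simp: A'_def\<close>)
    moreover have "prod g A = g x * g (f x) * prod g A'"
      using A' less.prems(1) by (simp add: mult.assoc)
    moreover have "{y\<in>A'. f y = y} = {y\<in>A. f y = y}" using x fx by (auto simp: A'_def)
    ultimately show ?thesis using less.prems(4) x by simp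
  qed
qed

lemma card_roots_of_unity_le:
  assumes "n > 0"
  shows "card {x::'a::idom. x ^ n = 1} \<le> n"
proof -
  define p :: "'a poly" where "p = monom 1 n - 1"
  have roots: "{x. x ^ n = 1} = {x. poly p x = 0}" by (simp add: p_def poly_monom)
  have "p \<noteq> 0"
  proof
    assume "p = 0"
    then have "poly p 0 = 0" by simp
    with assms show False by (simp add: p_def poly_monom power_0_left)
  qed
  moreover have "degree p \<le> n" unfolding p_def
    by (rule order.trans[OF degree_diff_le_max]) (simp add: degree_monom_le)
  ultimately show ?thesis unfolding roots using card_poly_roots_bound le_trans by blast
qed

lemma poly_eq_prod_diff_roots:
  fixes p :: "'a::idom poly"
  assumes "finite A" "degree p = card A" "lead_coeff p = 1" "\<And>a. a \<in> A \<Longrightarrow> poly p a = 0"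
  shows "poly p x = (\<Prod>a\<in>A. x - a)"
proof -
  define r where "r = (\<Prod>a\<in>A. [:-a, 1:])"
  have "lead_coeff r = 1" by (simp only: r_def lead_coeff_prod) simp
  moreover have "degree r = card A" by (simp add: r_def degree_prod_eq_sum_degree)
  moreover have "poly r a = 0" if "a \<in> A" for a
    using that assms(1) by (auto simp: r_def poly_prod)
  ultimately have "p = r"
    using assms by (intro poly_eqI_degree_lead_coeff[where A=A and n="card A"]) auto
  then show ?thesis by (simp add: r_def poly_prod)
qed

lemma is_square_power2 [simp]: "is_square (x ^ 2)"
  by (auto simp: is_square_def)

lemma is_square_0 [simp]: "is_square (0::'a::semiring_1)"
  using is_square_power2[of "0::'a"] by simp

lemma is_square_1 [simp]: "is_square (1::'a::monoid_mult)"
  using is_square_power2[of "1::'a"] by simp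

lemma is_square_inverse_iff [simp]: "is_square (inverse x) \<longleftrightarrow> is_square (x::'a::division_ring)"
  by (metis inverse_inverse_eq is_square_def power_inverse)

lemma is_square_mult_power2_iff:
  fixes a x :: "'a::field"
  assumes "x \<noteq> 0"
  shows "is_square (a * x ^ 2) \<longleftrightarrow> is_square a"
proof
  assume "is_square (a * x ^ 2)"
  then obtain r where "a * x ^ 2 = r ^ 2" by (auto simp: is_square_def)
  then have "a = (r / x) ^ 2" using assms by (simp add: power_divide field_simps)
  then show "is_square a" by simp
qed (metis is_square_def power_mult_distrib)

lemma is_square_power2_div_iff:
  fixes a c :: "'a::field"
  assumes "a \<noteq> 0" "c \<noteq> 0"
  shows "is_square (c ^ 2 / a) \<longleftrightarrow> is_square a"
proof -
  have "c ^ 2 / a = a * (c / a) ^ 2" using assms by (simp add: power2_eq_square)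
  then show ?thesis using assms is_square_mult_power2_iff[of "c / a" a] by simp
qed

lemma is_square_4: "is_square (4::'a::field)"
  using is_square_power2[of "2::'a"] by simp

section \<open>The quadratic character of a finite field of odd order\<close>

lemma two_neq_zero_if_odd_card:
  assumes "odd CARD('a)"
  shows "(2::'a::{finite,field}) \<noteq> 0"
proof
  assume "(2::'a) = 0"
  then have "(\<Prod>_::'a\<in>UNIV. -1::int) = (\<Prod>_\<in>{x::'a\<in>UNIV. x + 1 = x}. -1)"
    by (intro prod_involution_eq_prod_fixed_points) (auto simp: add.assoc one_add_one)
  then have "(-1::int) ^ CARD('a) = 1" by simp
  with assms show False by simp
qed

lemma power_card_minus_one_eq_one:
  fixes x :: "'a::{finite,field}"
  assumes "x \<noteq> 0"
  shows "x ^ (CARD('a) - 1) = 1"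
proof -
  let ?U = "UNIV - {0::'a}"
  have "prod (\<lambda>y. x * y) ?U = prod id ?U"
    using assms by (intro prod.reindex_bij_witness[where i="\<lambda>y. y / x" and j="\<lambda>y. x * y"]) auto
  then have "x ^ card ?U = 1" by (simp add: prod.distrib)
  then show ?thesis by (simp add: card_Diff_singleton)
qed

lemma card_nonzero_squares:
  assumes "(2::'a::{finite,field}) \<noteq> 0"
  shows "2 * card {x::'a. x \<noteq> 0 \<and> is_square x} = CARD('a) - 1"
proof -
  let ?Q = "{x::'a. x \<noteq> 0 \<and> is_square x}"
  have "card {r::'a. r ^ 2 = s} = 2" if "s \<in> ?Q" for s
  proof -
    from that obtain r where r: "s = r ^ 2" "r \<noteq> 0" by (auto simp: is_square_def)
    then have "r \<noteq> - r" using assms by (auto simp: minus_equation_iff[of r] simp flip: mult_2)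
    moreover have "{x::'a. x ^ 2 = s} = {r, - r}" using r by (auto simp: power2_eq_iff)
    ultimately show ?thesis by simp
  qed
  then have "card (\<Union>s\<in>?Q. {r. r ^ 2 = s}) = 2 * card ?Q"
    by (subst card_UN_disjoint) auto
  moreover have "(\<Union>s\<in>?Q. {r. r ^ 2 = s}) = UNIV - {0}"
    by (auto simp: is_square_def)
  ultimately show ?thesis by (simp add: card_Diff_singleton)
qed

lemma card_minus_one_div_two_pos:
  assumes "(2::'a::{finite,field}) \<noteq> 0"
  shows "0 < (CARD('a) - 1) div 2"
proof -
  have "0 < card {x::'a. x \<noteq> 0 \<and> is_square x}"
    by (rule card_gt_0_iff[THEN iffD2]) (auto intro!: exI[of _ 1])
  then show ?thesis using card_nonzero_squares[OF assms] by linarith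
qed

lemma card_eq_two_mult_half_add_one:
  assumes "(2::'a::{finite,field}) \<noteq> 0"
  shows "CARD('a) = 2 * ((CARD('a) - 1) div 2) + 1"
proof -
  have "0 < CARD('a)" by simp
  with card_nonzero_squares[OF assms] show ?thesis by presburger
qed

lemma card_nonsquares:
  assumes "(2::'a::{finite,field}) \<noteq> 0"
  shows "card {x::'a. \<not> is_square x} = (CARD('a) - 1) div 2"
proof -
  let ?Q = "{x::'a. x \<noteq> 0 \<and> is_square x}" and ?N = "{x::'a. \<not> is_square x}"
  have "CARD('a) = card (insert 0 (?Q \<union> ?N))" by (rule arg_cong[where f=card]) auto
  also have "\<dots> = Suc (card ?Q + card ?N)" by (simp add: card_Un_disjoint disjoint_iff)
  finally show ?thesis using card_nonzero_squares[OF assms] by linarith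
qed

lemma euler_criterion_finite_field:
  fixes c :: "'a::{finite,field}"
  assumes two: "(2::'a) \<noteq> 0" and "c \<noteq> 0"
  shows "c ^ ((CARD('a) - 1) div 2) = (if is_square c then 1 else -1)"
proof -
  define m where "m = (CARD('a) - 1) div 2"
  let ?Q = "{x::'a. x \<noteq> 0 \<and> is_square x}"
  have card_Q: "card ?Q = m"
    using card_nonzero_squares[OF two] unfolding m_def by (metis div_mult_self1_is_m zero_less_numeral)
  have card: "2 * m = CARD('a) - 1" using card_nonzero_squares[OF two] card_Q by simp
  have Q_roots: "s ^ m = 1" if "s \<in> ?Q" for s
  proof -
    from that obtain r where r: "s = r ^ 2" by (auto simp: is_square_def)
    with that have "r \<noteq> 0" by auto
    with r show ?thesis using power_card_minus_one_eq_one[of r] card by (simp flip: power_mult)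
  qed
  have "(c ^ m) ^ 2 = 1"
    using power_card_minus_one_eq_one[OF \<open>c \<noteq> 0\<close>] card by (simp flip: power_mult add: mult.commute)
  then have "c ^ m = 1 \<or> c ^ m = -1" by (simp add: power2_eq_1_iff)
  moreover have "c ^ m \<noteq> 1" if "\<not> is_square c"
  proof
    assume "c ^ m = 1"
    then have "insert c ?Q \<subseteq> {x. x ^ m = 1}" using Q_roots by auto
    then have "card (insert c ?Q) \<le> m"
      using card_roots_of_unity_le[of m, where 'a='a] card_minus_one_div_two_pos[OF two]
      by (metis (no_types, lifting) card_mono finite m_def order_trans)
    with that card_Q show False by simp
  qed
  ultimately show ?thesis using Q_roots \<open>c \<noteq> 0\<close> by (auto simp: m_def)
qed

lemma is_square_mult_iff:
  assumes "(2::'a::{finite,field}) \<noteq> 0" "x \<noteq> 0" "y \<noteq> 0"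
  shows "is_square (x * y) \<longleftrightarrow> (is_square x \<longleftrightarrow> is_square (y::'a))"
proof -
  have "(1::'a) \<noteq> -1" using assms(1) by (metis one_add_one add.right_inverse)
  then show ?thesis
    using euler_criterion_finite_field[OF assms(1)] assms(2,3)
    by (metis (no_types, lifting) mult_eq_0_iff power_mult_distrib mult_1 mult_minus1 minus_minus)
qed

lemma is_square_minus_one_iff:
  assumes "(2::'a::{finite,field}) \<noteq> 0"
  shows "is_square (-1::'a) \<longleftrightarrow> even ((CARD('a) - 1) div 2)"
proof -
  have "(1::'a) \<noteq> -1" using assms by (metis one_add_one add.right_inverse)
  moreover have "(-1::'a) ^ ((CARD('a) - 1) div 2) = (if is_square (-1::'a) then 1 else -1)"
    by (rule euler_criterion_finite_field[OF assms]) simp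
  ultimately show ?thesis by (auto simp: minus_one_power_iff split: if_splits)
qed

lemma prod_diff_nonsquares:
  assumes "(2::'a::{finite,field}) \<noteq> 0"
  shows "(\<Prod>n\<in>{x::'a. \<not> is_square x}. c - n) = c ^ ((CARD('a) - 1) div 2) + 1"
proof -
  define m where "m = (CARD('a) - 1) div 2"
  define p :: "'a poly" where "p = monom 1 m + 1"
  have "m > 0" using card_minus_one_div_two_pos[OF assms] by (simp add: m_def)
  then have "degree p = m" "lead_coeff p = 1"
    by (simp_all add: p_def degree_add_eq_left degree_monom_eq)
  moreover have "poly p n = 0" if "\<not> is_square n" for n
  proof -
    have "n \<noteq> 0" using that by auto
    with that show ?thesis
      using euler_criterion_finite_field[OF assms \<open>n \<noteq> 0\<close>] by (simp add: p_def poly_monom m_def)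
  qed
  ultimately have "poly p c = (\<Prod>n\<in>{x. \<not> is_square x}. c - n)"
    by (intro poly_eq_prod_diff_roots) (simp_all add: card_nonsquares[OF assms] m_def)
  then show ?thesis by (simp add: p_def poly_monom m_def)
qed

lemma is_square_diff_power2_div_iff:
  fixes a c :: "'a::{finite,field}"
  assumes two: "(2::'a) \<noteq> 0" and "c \<noteq> 0" "a \<noteq> 0" "a \<noteq> c ^ 2"
  shows "is_square (c ^ 2 - c ^ 4 / a) \<longleftrightarrow>
    (is_square (-1::'a) \<longleftrightarrow> (is_square (c ^ 2 - a) \<longleftrightarrow> is_square a))"
proof -
  have nz: "c ^ 2 - a \<noteq> 0" "inverse a \<noteq> 0" "(c ^ 2 - a) * inverse a * c ^ 2 \<noteq> 0"
    using assms by auto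
  have "c ^ 2 - c ^ 4 / a = - 1 * ((c ^ 2 - a) * inverse a * c ^ 2)"
    using assms by (simp add: field_simps power2_eq_square power4_eq_xxxx)
  then have "is_square (c ^ 2 - c ^ 4 / a) \<longleftrightarrow>
      (is_square (-1::'a) \<longleftrightarrow> is_square ((c ^ 2 - a) * inverse a * c ^ 2))"
    using is_square_mult_iff[OF two _ nz(3), of "-1"] by simp
  also have "is_square ((c ^ 2 - a) * inverse a * c ^ 2) \<longleftrightarrow> is_square ((c ^ 2 - a) * inverse a)"
    by (rule is_square_mult_power2_iff[OF \<open>c \<noteq> 0\<close>])
  also have "\<dots> \<longleftrightarrow> (is_square (c ^ 2 - a) \<longleftrightarrow> is_square a)"
    using is_square_mult_iff[OF two nz(1,2)] by simp
  finally show ?thesis .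
qed

lemma numerals_neq_zero_if_two_neq_zero:
  assumes "(2::'a::field) \<noteq> 0"
  shows "(4::'a) \<noteq> 0" "(8::'a) \<noteq> 0" "(16::'a) \<noteq> 0"
proof -
  have "(4::'a) = 2 * 2" "(8::'a) = 2 * 4" "(16::'a) = 4 * 4" by simp_all
  with assms show "(4::'a) \<noteq> 0" "(8::'a) \<noteq> 0" "(16::'a) \<noteq> 0" by (metis mult_eq_0_iff)+
qed

lemma minus_four_power_eq_one:
  assumes two: "(2::'a::{finite,field}) \<noteq> 0" and k: "4 * k = CARD('a) - 1"
  shows "(- 4 :: 'a) ^ k = 1"
proof -
  define m where "m = (CARD('a) - 1) div 2"
  have "m = 2 * k" using k by (simp add: m_def)
  then obtain i :: 'a where i: "- 1 = i ^ 2"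
    using is_square_minus_one_iff[OF two] by (auto simp: is_square_def m_def)
  have "(1 + i) ^ 2 = 2 * i + (1 + i ^ 2)" by (simp add: power2_eq_square algebra_simps)
  then have "is_square (2 * i)" by (metis i add.right_inverse add_0_right is_square_power2)
  moreover have "2 * i \<noteq> 0" using two i by auto
  ultimately have "(2 * i) ^ m = 1"
    using euler_criterion_finite_field[OF two, of "2 * i"] by (simp only: m_def if_True not_False_eq_True simp_thms)
  moreover have "(2 * i) ^ 2 = - 4" by (simp add: power_mult_distrib flip: i)
  then have "(- 4) ^ k = (2 * i) ^ m"
    by (simp only: \<open>m = 2 * k\<close> power_mult)
  ultimately show ?thesis by simp
qed

section \<open>Classes of elements by the squareness of \<open>a\<close> and \<open>4 - a\<close>\<close>

definition square_pattern :: "bool \<Rightarrow> bool \<Rightarrow> 'a::field set" where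
  "square_pattern s t = {a. a \<noteq> 0 \<and> a \<noteq> 4 \<and> is_square a = s \<and> is_square (4 - a) = t}"

lemma bij_betw_square_pattern_swap:
  "bij_betw (\<lambda>a. 4 - a) (square_pattern s t) (square_pattern t s)"
  by (rule bij_betwI[where g="\<lambda>a. 4 - a"]) (auto simp: square_pattern_def)

lemma bij_betw_square_pattern_16_div:
  assumes two: "(2::'a::{finite,field}) \<noteq> 0"
  shows "bij_betw (\<lambda>a. 16 / a) (square_pattern s t :: 'a set)
    (square_pattern s (is_square (-1::'a) \<longleftrightarrow> (t \<longleftrightarrow> s)))"
proof -
  have sq: "is_square (16 / a) \<longleftrightarrow> is_square a"
    "is_square (4 - 16 / a) \<longleftrightarrow> (is_square (-1::'a) \<longleftrightarrow> (is_square (4 - a) \<longleftrightarrow> is_square a))"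
    if "a \<noteq> 0" "a \<noteq> 4" for a :: 'a
    using that is_square_power2_div_iff[of a 4] is_square_diff_power2_div_iff[OF two, of 2 a] two
    by (simp_all add: numerals_neq_zero_if_two_neq_zero[OF two])
  have ne: "16 / a \<noteq> 0 \<and> 16 / a \<noteq> 4" if "a \<noteq> 0" "a \<noteq> 4" for a :: 'a
  proof
    show "16 / a \<noteq> 0" using that numerals_neq_zero_if_two_neq_zero[OF two] by simp
    show "16 / a \<noteq> 4"
    proof
      assume "16 / a = 4"
      then have "4 * a = 4 * 4" using that by (simp add: divide_eq_eq)
      then show False using that numerals_neq_zero_if_two_neq_zero[OF two] mult_left_cancel by metis
    qed
  qed
  show ?thesis
    by (rule bij_betwI[where g="\<lambda>a. 16 / a"])
      (use ne sq numerals_neq_zero_if_two_neq_zero[OF two] in \<open>auto simp: square_pattern_def\<close>)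
qed

lemma nonsquares_eq_square_patterns:
  "{x::'a::field. \<not> is_square x} = square_pattern False False \<union> square_pattern False True"
  using is_square_4 by (auto simp: square_pattern_def)

lemma nonzero_squares_eq_square_patterns:
  assumes "(2::'a::field) \<noteq> 0"
  shows "{x::'a. x \<noteq> 0 \<and> is_square x} = insert 4 (square_pattern True False \<union> square_pattern True True)"
  using is_square_4 numerals_neq_zero_if_two_neq_zero[OF assms] by (auto simp: square_pattern_def)

lemma card_square_pattern_False_False:
  assumes two: "(2::'a::{finite,field}) \<noteq> 0"
  shows "card (square_pattern False False :: 'a set) = (CARD('a) + 1) div 4"
proof -
  define m where "m = (CARD('a) - 1) div 2"
  define k :: "bool \<Rightarrow> bool \<Rightarrow> nat" where "k s t = card (square_pattern s t :: 'a set)" for s t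
  have "k False False + k False True = m"
    using card_nonsquares[OF two] unfolding nonsquares_eq_square_patterns k_def m_def
    by (subst card_Un_disjoint[symmetric]) (auto simp: square_pattern_def)
  moreover have "k True False + k True True + 1 = m"
  proof -
    have "4 \<notin> square_pattern True False \<union> (square_pattern True True :: 'a set)"
      by (simp add: square_pattern_def)
    then have "card {x::'a. x \<noteq> 0 \<and> is_square x} = Suc (k True False + k True True)"
      unfolding nonzero_squares_eq_square_patterns[OF two] k_def
      by (simp add: card_Un_disjoint disjoint_iff square_pattern_def)
    then show ?thesis using card_nonzero_squares[OF two] by (simp add: m_def)
  qed
  moreover have "k False True = k True False"
    unfolding k_def by (rule bij_betw_same_card[OF bij_betw_square_pattern_swap])
  moreover have inv: "k s t = k s (is_square (-1::'a) \<longleftrightarrow> (t \<longleftrightarrow> s))" for s t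
    unfolding k_def by (rule bij_betw_same_card[OF bij_betw_square_pattern_16_div[OF two]])
  moreover have "CARD('a) = 2 * m + 1"
    unfolding m_def by (rule card_eq_two_mult_half_add_one[OF two])
  moreover have "k False False = k False True \<or> k True False = k True True"
    using inv[of False False] inv[of True False] by (cases "is_square (-1::'a)") simp_all
  ultimately show ?thesis unfolding k_def[symmetric] by linarith
qed

lemma prod_square_pattern_False_False_if_square_minus_one:
  assumes two: "(2::'a::{finite,field}) \<noteq> 0" and "is_square (-1::'a)"
  shows "\<Prod>(square_pattern False False :: 'a set) = 2"
proof -
  define S :: "'a set" where "S = square_pattern False False"
  define Y :: "'a set" where "Y = square_pattern False True"
  have four: "(4::'a) \<noteq> 0" using numerals_neq_zero_if_two_neq_zero[OF two] by simp
  have S_nz: "a \<noteq> 0" if "a \<in> S" for a using that by (simp add: S_def square_pattern_def)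
  have SY: "bij_betw (\<lambda>a. 16 / a) S Y"
    using bij_betw_square_pattern_16_div[OF two, of False False] assms(2) by (simp add: S_def Y_def)
  have card_S: "4 * card S = CARD('a) - 1"
    using card_square_pattern_False_False[OF two] card_eq_two_mult_half_add_one[OF two]
      \<open>is_square (-1)\<close> is_square_minus_one_iff[OF two]
    unfolding S_def by presburger
  have "(\<Prod>a\<in>S. 4 - a) * (\<Prod>a\<in>Y. 4 - a) = (\<Prod>n\<in>{x::'a. \<not> is_square x}. 4 - n)"
    unfolding nonsquares_eq_square_patterns S_def Y_def
    by (rule prod.union_disjoint[symmetric]) (auto simp: square_pattern_def)
  also have "\<dots> = 2"
    using prod_diff_nonsquares[OF two] euler_criterion_finite_field[OF two four] is_square_4[where 'a='a] by simp
  finally have prod_4_minus: "(\<Prod>a\<in>S. 4 - a) * (\<Prod>a\<in>Y. 4 - a) = 2" .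
  have prod_S: "(\<Prod>a\<in>S. 4 - a) = \<Prod>S"
    using prod.reindex_bij_betw[OF bij_betw_square_pattern_swap[of False False], of id]
    by (simp add: S_def)
  have "(\<Prod>a\<in>Y. 4 - a) = (\<Prod>a\<in>S. 4 - 16 / a)"
    using prod.reindex_bij_betw[OF SY, of "\<lambda>a. 4 - a"] by simp
  also have "\<dots> = (\<Prod>a\<in>S. - 4 * ((4 - a) / a))"
    using S_nz by (intro prod.cong) (auto simp: field_simps)
  also have "\<dots> = (- 4) ^ card S * ((\<Prod>a\<in>S. 4 - a) / \<Prod>S)"
    by (simp only: prod.distrib prod_constant prod_dividef)
  also have "\<dots> = (- 4) ^ card S"
    using S_nz prod_S by simp
  also have "\<dots> = 1" by (rule minus_four_power_eq_one[OF two card_S])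
  finally show ?thesis using prod_4_minus prod_S by (simp add: S_def)
qed

lemma fixed_points_16_div_square_pattern:
  assumes two: "(2::'a::{finite,field}) \<noteq> 0" and "\<not> is_square (-1::'a)"
  shows "{a \<in> square_pattern False False. 16 / a = a} = (if is_square (2::'a) then {} else {- 4 :: 'a})"
proof -
  have nz: "(4::'a) \<noteq> 0" "(8::'a) \<noteq> 0" using numerals_neq_zero_if_two_neq_zero[OF two] by simp_all
  have "16 / a = a \<longleftrightarrow> a = 4 \<or> a = - 4" if "a \<noteq> 0" for a :: 'a
  proof -
    have "16 / a = a \<longleftrightarrow> a ^ 2 = 4 ^ 2" using that by (auto simp: field_simps power2_eq_square)
    then show ?thesis using power2_eq_iff[of a 4] by simp
  qed
  then have "{a \<in> square_pattern False False. 16 / a = a} = {a \<in> square_pattern False False. a = (- 4 :: 'a)}"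
    by (auto simp: square_pattern_def)
  moreover have "(- 4 :: 'a) \<in> square_pattern False False \<longleftrightarrow> \<not> is_square (2::'a)"
  proof -
    have "is_square (- 4 :: 'a) \<longleftrightarrow> is_square (-1::'a)"
      using is_square_mult_power2_iff[of 2 "-1::'a"] two by simp
    moreover have "is_square (8 :: 'a) \<longleftrightarrow> is_square (2::'a)"
      using is_square_mult_power2_iff[of 2 "2::'a"] two by simp
    ultimately show ?thesis using assms(2) nz by (simp add: square_pattern_def)
  qed
  ultimately show ?thesis by auto
qed

lemma prod_square_pattern_False_False_if_nonsquare_minus_one:
  assumes two: "(2::'a::{finite,field}) \<noteq> 0" and "\<not> is_square (-1::'a)"
  shows "\<Prod>(square_pattern False False :: 'a set) = 2"
proof -
  define m where "m = (CARD('a) - 1) div 2"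
  define S :: "'a set" where "S = square_pattern False False"
  have nz: "(4::'a) \<noteq> 0" "(16::'a) \<noteq> 0"
    using numerals_neq_zero_if_two_neq_zero[OF two] by simp_all
  have S_nz: "a \<noteq> 0" if "a \<in> S" for a using that by (simp add: S_def square_pattern_def)
  have card_S: "2 * card S = m + 1"
    using card_square_pattern_False_False[OF two] card_eq_two_mult_half_add_one[OF two]
      \<open>\<not> is_square (-1)\<close> is_square_minus_one_iff[OF two]
    unfolding S_def m_def by presburger
  have "bij_betw (\<lambda>a. 16 / a) S S"
    using bij_betw_square_pattern_16_div[OF two, of False False] assms(2) by (simp add: S_def)
  then have "(\<Prod>a\<in>S. a / 4) = (\<Prod>a\<in>{a\<in>S. 16 / a = a}. a / 4)"
    using S_nz nz by (intro prod_involution_eq_prod_fixed_points) (auto simp: bij_betw_def)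
  also have "{a\<in>S. 16 / a = a} = (if is_square (2::'a) then {} else {- 4})"
    unfolding S_def by (rule fixed_points_16_div_square_pattern[OF two assms(2)])
  finally have "\<Prod>S / 4 ^ card S = 2 ^ m"
    using euler_criterion_finite_field[OF two two] nz(1) by (simp add: prod_dividef m_def)
  then have "\<Prod>S = 2 ^ m * 4 ^ card S" using nz(1) by (simp add: divide_eq_eq)
  also have "(4::'a) ^ card S = 2 ^ (2 * card S)" by (simp add: power_mult)
  also have "\<dots> = 2 * 2 ^ m" using card_S by simp
  also have "2 ^ m * (2 * 2 ^ m) = 2 * (2 ^ m * (2::'a) ^ m)" by (simp only: ac_simps)
  also have "(2::'a) ^ m * 2 ^ m = 1"
    using euler_criterion_finite_field[OF two two] by (simp add: m_def)
  finally show ?thesis by (simp add: S_def)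
qed

lemma prod_square_pattern_False_False:
  assumes "(2::'a::{finite,field}) \<noteq> 0"
  shows "\<Prod>(square_pattern False False :: 'a set) = 2"
  using prod_square_pattern_False_False_if_square_minus_one[OF assms]
    prod_square_pattern_False_False_if_nonsquare_minus_one[OF assms] by blast

theorem theorem6p2:
  assumes "odd (card (UNIV :: 'a::{finite,field} set))"
  shows "\<Prod>{a::'a. a \<noteq> 0 \<and> \<not> is_square a \<and> \<not> is_square (4 - a)} = 2
    \<and> (card (UNIV :: 'a set) mod 8 \<in> {1, 7} \<longrightarrow>
         \<Prod>{a::'a. a \<noteq> 0 \<and> \<not> is_square (- a) \<and> \<not> is_square (4 + a)} = 2)
    \<and> (card (UNIV :: 'a set) mod 8 \<in> {3, 5} \<longrightarrow>
         \<Prod>{a::'a. a \<noteq> 0 \<and> \<not> is_square (- a) \<and> \<not> is_square (4 + a)} = - 2)"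
proof -
  have two: "(2::'a) \<noteq> 0" using assms by (rule two_neq_zero_if_odd_card)
  define S :: "'a set" where "S = square_pattern False False"
  have S_eq: "{a::'a. a \<noteq> 0 \<and> \<not> is_square a \<and> \<not> is_square (4 - a)} = S"
    using is_square_4[where 'a='a] by (auto simp: S_def square_pattern_def)
  have "uminus ` S = {a. - a \<in> S}" by (rule set_eqI) (metis image_iff minus_minus mem_Collect_eq)
  also have "\<dots> = {a::'a. a \<noteq> 0 \<and> \<not> is_square (- a) \<and> \<not> is_square (4 + a)}"
    using is_square_4[where 'a='a] by (auto simp: S_def square_pattern_def)
  finally have minus_S_eq: "{a::'a. a \<noteq> 0 \<and> \<not> is_square (- a) \<and> \<not> is_square (4 + a)} = uminus ` S" ..
  have prod_S: "\<Prod>S = 2" unfolding S_def by (rule prod_square_pattern_False_False[OF two])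
  have card_S: "card S = (CARD('a) + 1) div 4"
    unfolding S_def by (rule card_square_pattern_False_False[OF two])
  have "\<Prod>(uminus ` S) = (-1) ^ card S * \<Prod>S"
    by (simp add: prod.reindex prod_uminus)
  then have prod_minus_S: "\<Prod>(uminus ` S) = (-1) ^ ((CARD('a) + 1) div 4) * 2"
    using prod_S card_S by simp
  have "CARD('a) mod 8 \<in> {1, 7} \<longleftrightarrow> even ((CARD('a) + 1) div 4)"
    "CARD('a) mod 8 \<in> {3, 5} \<longleftrightarrow> odd ((CARD('a) + 1) div 4)"
    using assms by (simp_all add: even_iff_mod_2_eq_zero) presburger+
  then show ?thesis unfolding S_eq minus_S_eq prod_S prod_minus_S by simp
qed

end
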